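(* Let $A$ be a unital involutive $k$-algebra. The $k$-submodule of $A$ spanned by all elements $a_0a_1a_2-a_2\overline{a_1}a_0$, with $a_0,a_1,a_2\in A$, is a two-sided ideal of $A$.
   Context: $k$ is a commutative ring. An involutive $k$-algebra is a unital associative $k$-algebra with a $k$-linear map $a\mapsto\overline a$ satisfying $\overline{\overline a}=a$, $\overline{ab}=\overline b\,\overline a$ and $\overline1=1$. *)

theory Defs
  imports Main
begin

text \<open>A unital associative k-algebra: the ring structure of A is the type class ring_1,
  the k-module structure is a scalar multiplication sm, bilinear w.r.t. the product.\<close>
definition k_algebra :: "('k::comm_ring_1 \<Rightarrow> 'a::ring_1 \<Rightarrow> 'a) \<Rightarrow> bool" where
  "k_algebra sm \<longleftrightarrow>
     (\<forall>c x y. sm c (x + y) = sm c x + sm c y) \<and>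
     (\<forall>c d x. sm (c + d) x = sm c x + sm d x) \<and>
     (\<forall>c d x. sm (c * d) x = sm c (sm d x)) \<and>
     (\<forall>x. sm 1 x = x) \<and>
     (\<forall>c x y. sm c (x * y) = sm c x * y) \<and>
     (\<forall>c x y. sm c (x * y) = x * sm c y)"

definition k_linear :: "('k::comm_ring_1 \<Rightarrow> 'a::ring_1 \<Rightarrow> 'a) \<Rightarrow> ('a \<Rightarrow> 'a) \<Rightarrow> bool" where
  "k_linear sm f \<longleftrightarrow> (\<forall>x y. f (x + y) = f x + f y) \<and> (\<forall>c x. f (sm c x) = sm c (f x))"

definition involutive_algebra ::
  "('k::comm_ring_1 \<Rightarrow> 'a::ring_1 \<Rightarrow> 'a) \<Rightarrow> ('a \<Rightarrow> 'a) \<Rightarrow> bool" where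
  "involutive_algebra sm bar \<longleftrightarrow>
     k_algebra sm \<and> k_linear sm bar \<and>
     (\<forall>a. bar (bar a) = a) \<and> (\<forall>a b. bar (a * b) = bar b * bar a) \<and> bar 1 = 1"

inductive_set k_span :: "('k::comm_ring_1 \<Rightarrow> 'a::ring_1 \<Rightarrow> 'a) \<Rightarrow> 'a set \<Rightarrow> 'a set"
  for sm :: "'k \<Rightarrow> 'a \<Rightarrow> 'a" and X :: "'a set" where
  base: "x \<in> X \<Longrightarrow> x \<in> k_span sm X"
| zero: "0 \<in> k_span sm X"
| add: "x \<in> k_span sm X \<Longrightarrow> y \<in> k_span sm X \<Longrightarrow> x + y \<in> k_span sm X"
| smult: "x \<in> k_span sm X \<Longrightarrow> sm c x \<in> k_span sm X"

definition k_submodule :: "('k::comm_ring_1 \<Rightarrow> 'a::ring_1 \<Rightarrow> 'a) \<Rightarrow> 'a set \<Rightarrow> bool" where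
  "k_submodule sm I \<longleftrightarrow> 0 \<in> I \<and> (\<forall>x\<in>I. \<forall>y\<in>I. x + y \<in> I) \<and> (\<forall>c. \<forall>x\<in>I. sm c x \<in> I)"

definition two_sided_ideal :: "('k::comm_ring_1 \<Rightarrow> 'a::ring_1 \<Rightarrow> 'a) \<Rightarrow> 'a set \<Rightarrow> bool" where
  "two_sided_ideal sm I \<longleftrightarrow> k_submodule sm I \<and> (\<forall>a x. x \<in> I \<longrightarrow> a * x \<in> I \<and> x * a \<in> I)"

end

theory Submission
  imports Defs
begin

text \<open>Multiplying a generator \<open>a\<^sub>0 a\<^sub>1 a\<^sub>2 - a\<^sub>2 (bar a\<^sub>1) a\<^sub>0\<close> by an arbitrary
  element on either side gives a sum of three generators; this uses only that the
  involution is an anti-automorphism of order two fixing 1, not its linearity.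
  Since the span of a set is an ideal as soon as the products of its elements with
  arbitrary elements lie in the span, the span of the generators is an ideal.\<close>

definition twisted_comm :: "('a::ring_1 \<Rightarrow> 'a) \<Rightarrow> 'a \<Rightarrow> 'a \<Rightarrow> 'a \<Rightarrow> 'a" where
  "twisted_comm bar x y z = x * y * z - z * bar y * x"

lemma twisted_comm_mult_left:
  fixes bar :: "'a::ring_1 \<Rightarrow> 'a"
  assumes "\<And>a. bar (bar a) = a"
    and "\<And>a b. bar (a * b) = bar b * bar a"
    and "bar 1 = 1"
  shows "a * twisted_comm bar x y z =
           twisted_comm bar a (x * y) z + twisted_comm bar (z * bar y) 1 (bar x * a)
           + twisted_comm bar 1 (bar x) (a * z * bar y)"
  by (simp add: twisted_comm_def assms algebra_simps)

lemma twisted_comm_mult_right: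
  fixes bar :: "'a::ring_1 \<Rightarrow> 'a"
  assumes "\<And>a. bar (bar a) = a"
    and "\<And>a b. bar (a * b) = bar b * bar a"
    and "bar 1 = 1"
  shows "twisted_comm bar x y z * a =
           twisted_comm bar 1 x (y * z * a) + twisted_comm bar (y * z) 1 (a * bar x)
           + twisted_comm bar a (bar x * y) z"
  by (simp add: twisted_comm_def assms algebra_simps)

lemma k_submodule_k_span: "k_submodule sm (k_span sm X)"
  unfolding k_submodule_def by (auto intro: k_span.intros)

lemma two_sided_ideal_k_span:
  assumes "k_algebra sm"
    and generators_absorb: "\<And>a x. x \<in> X \<Longrightarrow> a * x \<in> k_span sm X \<and> x * a \<in> k_span sm X"
  shows "two_sided_ideal sm (k_span sm X)"
proof -
  have "a * x \<in> k_span sm X \<and> x * a \<in> k_span sm X" if "x \<in> k_span sm X" for a x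
    using that
  proof (induction x rule: k_span.induct)
    case (base x)
    then show ?case by (rule generators_absorb)
  next
    case zero
    then show ?case by (simp add: k_span.zero)
  next
    case (add x y)
    then show ?case by (simp add: distrib_left distrib_right k_span.add)
  next
    case (smult x c)
    have "a * sm c x = sm c (a * x)" and "sm c x * a = sm c (x * a)"
      using \<open>k_algebra sm\<close> unfolding k_algebra_def by metis+
    with smult.IH show ?case by (simp add: k_span.smult)
  qed
  then show ?thesis
    unfolding two_sided_ideal_def using k_submodule_k_span by blast
qed

theorem lemma5p7:
  fixes sm :: "'k::comm_ring_1 \<Rightarrow> 'a::ring_1 \<Rightarrow> 'a" and bar :: "'a \<Rightarrow> 'a"
  assumes "involutive_algebra sm bar"
  shows "two_sided_ideal sm (k_span sm {a0 * a1 * a2 - a2 * bar a1 * a0 | a0 a1 a2. True})"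
proof -
  have alg: "k_algebra sm" and bar_laws: "\<And>a. bar (bar a) = a"
      "\<And>a b. bar (a * b) = bar b * bar a" "bar 1 = 1"
    using assms unfolding involutive_algebra_def by auto
  define X where "X = {twisted_comm bar a0 a1 a2 | a0 a1 a2. True}"
  have generator: "twisted_comm bar x y z \<in> k_span sm X" for x y z
    unfolding X_def by (rule k_span.base) blast
  have "two_sided_ideal sm (k_span sm X)"
  proof (rule two_sided_ideal_k_span[OF alg])
    fix a x
    assume "x \<in> X"
    then obtain a0 a1 a2 where "x = twisted_comm bar a0 a1 a2"
      unfolding X_def by blast
    then show "a * x \<in> k_span sm X \<and> x * a \<in> k_span sm X"
      using twisted_comm_mult_left[OF bar_laws] twisted_comm_mult_right[OF bar_laws]
      by (simp add: generator k_span.add)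
  qed
  then show ?thesis
    unfolding X_def twisted_comm_def .
qed

end
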